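(* Let $A\in\mathbb{R}^{m\times n}$ with $AA^{\top}$ invertible, let $0<x_{\min}\le x_{\max}$, and let $\boldsymbol x_o,\hat{\boldsymbol x},\tilde{\boldsymbol x}\in\mathbb{R}^n$ have all entries in $[x_{\min},x_{\max}]$. Put $X_o=\mathrm{diag}(\boldsymbol x_o)$, $\hat X=\mathrm{diag}(\hat{\boldsymbol x})$, $\tilde X=\mathrm{diag}(\tilde{\boldsymbol x})$, $\Sigma_o=(AX_o^2A^{\top})^{-1}$, $\hat\Sigma=(A\hat X^2A^{\top})^{-1}$, $\tilde\Sigma=(A\tilde X^2A^{\top})^{-1}$. Then every eigenvalue $\lambda_i$ of $\Sigma_o^{-1/2}(\hat\Sigma-\tilde\Sigma)\Sigma_o^{-1/2}$ satisfies $$|\lambda_i|\le \frac{x_{\max}^2\,\lambda_{\max}^2(AA^{\top})\,\|\hat{\boldsymbol x}^2-\tilde{\boldsymbol x}^2\|_\infty}{x_{\min}^4\,\lambda_{\min}^2(AA^{\top})}.$$ Furthermore, for any $\sigma_w>0$ and any vectors $\boldsymbol w_1,\dots,\boldsymbol w_L\in\mathbb{R}^n$, with $\boldsymbol y_\ell=AX_o\boldsymbol w_\ell$, $$\Big|\frac1{L\sigma_w^2}\sum_{\ell=1}^L\boldsymbol y_\ell^{\top}(\hat\Sigma-\tilde\Sigma)\boldsymbol y_\ell\Big|\le \frac{x_{\max}^2\,\lambda_{\max}^2(AA^{\top})\,\|\hat{\boldsymbol x}^2-\tilde{\boldsymbol x}^2\|_\infty}{x_{\min}^4\,\lambda_{\min}^2(AA^{\top})}\Big(1+\frac1{L\sigma_w^2}\sum_{\ell=1}^L\boldsymbol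 w_\ell^{\top}\boldsymbol w_\ell\Big).$$
   Context: For a vector $\boldsymbol x$, $\boldsymbol x^2$ denotes the entrywise square; $\lambda_{\max},\lambda_{\min}$ denote largest and smallest eigenvalues; $\Sigma_o^{-1/2}$ is the symmetric square root of $\Sigma_o^{-1}=AX_o^2A^{\top}$ inverted appropriately (i.e. $(AX_o^2A^{\top})^{1/2}$). *)

theory Defs
  imports "HOL-Analysis.Analysis"
begin

definition diag_mat :: "real^'n \<Rightarrow> real^'n^'n" where
  "diag_mat x = (\<chi> i j. if i = j then x $ i else 0)"

definition vec_sq :: "real^'n \<Rightarrow> real^'n" where
  "vec_sq x = (\<chi> i. (x $ i)^2)"

definition is_eigenvalue :: "real^'n^'n \<Rightarrow> real \<Rightarrow> bool" where
  "is_eigenvalue M lam \<longleftrightarrow> (\<exists>v. v \<noteq> 0 \<and> M *v v = lam *\<^sub>R v)"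

definition lambda_max :: "real^'n^'n \<Rightarrow> real" where
  "lambda_max M = Max {lam. is_eigenvalue M lam}"

definition lambda_min :: "real^'n^'n \<Rightarrow> real" where
  "lambda_min M = Min {lam. is_eigenvalue M lam}"

definition psd_mat :: "real^'n^'n \<Rightarrow> bool" where
  "psd_mat S \<longleftrightarrow> transpose S = S \<and> (\<forall>v. 0 \<le> v \<bullet> (S *v v))"

definition mat_sqrt :: "real^'n^'n \<Rightarrow> real^'n^'n" where
  "mat_sqrt M = (THE S. psd_mat S \<and> S ** S = M)"

end

theory Submission
  imports Defs
begin

(* Write G x = A diag(x^2) A^T, so that Sig_hat and Sig_tilde are the inverses of G x_hat and
   G x_tilde. The Rayleigh quotients of G x lie in [x_min^2 lambda_min(A A^T), x_max^2 lambda_max(A A^T)],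
   so G x^-1 has operator norm at most 1 / (x_min^2 lambda_min(A A^T)). The resolvent identity
   G x_hat^-1 - G x_tilde^-1 = G x_hat^-1 (G x_tilde - G x_hat) G x_tilde^-1, where
   G x_tilde - G x_hat = A diag(x_tilde^2 - x_hat^2) A^T has operator norm at most
   lambda_max(A A^T) |x_hat^2 - x_tilde^2|_inf, then bounds the operator norm of Sig_hat - Sig_tilde.
   Both the square root of G x_o and the map w |-> A X_o w have operator norm at most
   x_max sqrt(lambda_max(A A^T)), which accounts for the remaining factor in both claims.
   The spectral theorem for symmetric matrices, needed for lambda_min, lambda_max and the square root,
   is proved by maximising the Rayleigh quotient on orthogonal complements. *)

lemma inner_matrix_vector_transpose:
  "((A::real^'n^'m) *v x) \<bullet> y = x \<bullet> (transpose A *v y)"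
  by (metis dot_lmul_matrix inner_commute transpose_matrix_vector)

lemma symmetric_inner_matrix_vector:
  fixes M :: "real^'m^'m"
  assumes "transpose M = M"
  shows "(M *v x) \<bullet> y = x \<bullet> (M *v y)"
  using inner_matrix_vector_transpose[of M x y] assms by simp

lemma rayleigh_maximizer_exists:
  fixes M :: "real^'m^'m"
  assumes V: "subspace V" "V \<noteq> {0}"
  obtains u where "u \<in> V" "norm u = 1"
    "\<And>z. z \<in> V \<Longrightarrow> z \<bullet> (M *v z) \<le> (u \<bullet> (M *v u)) * (z \<bullet> z)"
proof -
  let ?K = "V \<inter> sphere 0 1"
  have normalize: "z /\<^sub>R norm z \<in> ?K" if "z \<in> V" "z \<noteq> 0" for z
    using that V(1) by (simp add: subspace_scale)
  obtain v where "v \<in> V" "v \<noteq> 0"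
    using V subspace_0 by blast
  then have nonempty: "?K \<noteq> {}"
    using normalize by blast
  have compact: "compact ?K"
    using closed_subspace[OF V(1)] compact_sphere by (rule closed_Int_compact)
  have continuous: "continuous_on ?K (\<lambda>z. z \<bullet> (M *v z))"
    by (intro continuous_intros)
  obtain u where u: "u \<in> ?K" and umax: "\<And>y. y \<in> ?K \<Longrightarrow> y \<bullet> (M *v y) \<le> u \<bullet> (M *v u)"
    using continuous_attains_sup[OF compact nonempty continuous] by blast
  have "z \<bullet> (M *v z) \<le> (u \<bullet> (M *v u)) * (z \<bullet> z)" if "z \<in> V" for z
  proof (cases "z = 0")
    case False
    have "(z \<bullet> (M *v z)) / (z \<bullet> z) = (z /\<^sub>R norm z) \<bullet> (M *v (z /\<^sub>R norm z))"
      using False by (simp add: matrix_vector_mult_scaleR power2_norm_eq_inner[symmetric] field_simps power2_eq_square)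
    also have "\<dots> \<le> u \<bullet> (M *v u)"
      using umax normalize that False by blast
    finally show ?thesis
      using False by (simp add: divide_le_eq)
  qed simp
  with u that show thesis
    by auto
qed

lemma rayleigh_maximizer_eigenvector:
  fixes M :: "real^'m^'m"
  assumes sym: "transpose M = M" and V: "subspace V" and inv: "\<And>v. v \<in> V \<Longrightarrow> M *v v \<in> V"
    and u: "u \<in> V" "norm u = 1"
    and max: "\<And>z. z \<in> V \<Longrightarrow> z \<bullet> (M *v z) \<le> (u \<bullet> (M *v u)) * (z \<bullet> z)"
  shows "M *v u = (u \<bullet> (M *v u)) *\<^sub>R u"
proof -
  define lam where "lam = u \<bullet> (M *v u)"
  define d where "d = lam *\<^sub>R u - M *v u"
  define c where "c = lam * (d \<bullet> d) - d \<bullet> (M *v d)"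
  have dV: "d \<in> V"
    unfolding d_def using V u(1) inv by (simp add: subspace_diff subspace_scale)
  have uu: "u \<bullet> u = 1"
    using u(2) by (simp add: norm_eq_1)
  have ud: "u \<bullet> d = 0"
    by (simp add: d_def inner_diff_right uu lam_def)
  have Mu: "M *v u = lam *\<^sub>R u - d"
    by (simp add: d_def)
  have dMu: "d \<bullet> (M *v u) = - (d \<bullet> d)"
    by (simp add: Mu inner_diff_right inner_commute[of d u] ud)
  have uMd: "u \<bullet> (M *v d) = - (d \<bullet> d)"
    using symmetric_inner_matrix_vector[OF sym, of u d] by (simp add: Mu inner_diff_left ud)
  \<comment> \<open>maximality of u along u - t d: the first-order gain 2 t |d|^2 must be dominated by the t^2 term\<close>
  have first_order: "2 * (d \<bullet> d) \<le> t * c" if "t > 0" for t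
  proof -
    have "(u - t *\<^sub>R d) \<bullet> (M *v (u - t *\<^sub>R d)) \<le> lam * ((u - t *\<^sub>R d) \<bullet> (u - t *\<^sub>R d))"
      using max V u(1) dV unfolding lam_def by (simp add: subspace_diff subspace_scale)
    moreover have "(u - t *\<^sub>R d) \<bullet> (M *v (u - t *\<^sub>R d)) = lam + 2 * t * (d \<bullet> d) + t\<^sup>2 * (d \<bullet> (M *v d))"
      using dMu uMd unfolding lam_def
      by (simp add: matrix_vector_mult_diff_distrib matrix_vector_mult_scaleR inner_diff_left
          inner_diff_right inner_commute[of d u] power2_eq_square algebra_simps)
    moreover have "(u - t *\<^sub>R d) \<bullet> (u - t *\<^sub>R d) = 1 + t\<^sup>2 * (d \<bullet> d)"
      using uu ud by (simp add: inner_diff_left inner_diff_right inner_commute[of d u] power2_eq_square)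
    ultimately have "t * (2 * (d \<bullet> d)) \<le> t * (t * c)"
      by (simp add: c_def power2_eq_square algebra_simps)
    then show ?thesis
      using that by simp
  qed
  have "\<forall>\<^sub>F t in at_right 0. 2 * (d \<bullet> d) \<le> t * c"
    by (intro eventually_mono[OF eventually_at_right_less] first_order)
  moreover have "((\<lambda>t. t * c) \<longlongrightarrow> 0 * c) (at_right 0)"
    by (intro tendsto_intros)
  ultimately have "2 * (d \<bullet> d) \<le> 0 * c"
    using tendsto_lowerbound trivial_limit_at_right_real by blast
  then have "d \<bullet> d = 0"
    using inner_ge_zero[of d] by linarith
  then have "d = 0"
    by simp
  then show ?thesis
    by (simp add: d_def lam_def)
qed

subsection \<open>Orthonormal eigenbases\<close>

definition orthonormal :: "'a::real_inner set \<Rightarrow> bool" where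
  "orthonormal B \<longleftrightarrow> finite B \<and> pairwise orthogonal B \<and> (\<forall>u\<in>B. norm u = 1)"

definition orthonormal_eigenvectors :: "real^'m^'m \<Rightarrow> (real^'m) set \<Rightarrow> bool" where
  "orthonormal_eigenvectors M B \<longleftrightarrow> orthonormal B \<and> (\<forall>u\<in>B. \<exists>lam. M *v u = lam *\<^sub>R u)"

definition orthonormal_eigenbasis :: "real^'m^'m \<Rightarrow> (real^'m) set \<Rightarrow> bool" where
  "orthonormal_eigenbasis M B \<longleftrightarrow>
     orthonormal_eigenvectors M B \<and> (\<forall>v. v = (\<Sum>u\<in>B. (u \<bullet> v) *\<^sub>R u))"

lemma orthonormal_inner_sum:
  assumes "orthonormal B" "w \<in> B"
  shows "w \<bullet> (\<Sum>u\<in>B. f u *\<^sub>R u) = f w"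
proof -
  have "w \<bullet> (\<Sum>u\<in>B. f u *\<^sub>R u) = (\<Sum>u\<in>B. if u = w then f w else 0)"
    unfolding inner_sum_right
  proof (rule sum.cong[OF refl])
    fix u
    assume "u \<in> B"
    then show "w \<bullet> (f u *\<^sub>R u) = (if u = w then f w else 0)"
      using assms by (auto simp: orthonormal_def pairwise_def orthogonal_def norm_eq_1)
  qed
  then show ?thesis
    using assms by (simp add: orthonormal_def)
qed

lemma orthonormal_card_le:
  fixes B :: "(real^'m) set"
  assumes "orthonormal B"
  shows "card B \<le> CARD('m)"
proof -
  have "0 \<notin> B"
    using assms by (force simp: orthonormal_def)
  then have "independent B"
    using assms pairwise_orthogonal_independent by (auto simp: orthonormal_def)
  then show ?thesis
    using independent_card_le by fastforce
qed

lemma unit_eigenvector_rayleigh: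
  assumes "norm u = 1" "M *v u = lam *\<^sub>R u"
  shows "M *v u = (u \<bullet> (M *v u)) *\<^sub>R u"
  using assms by (simp add: norm_eq_1)

lemma maximal_orthonormal_eigenvectors_basis:
  fixes M :: "real^'m^'m"
  assumes sym: "transpose M = M" and B: "orthonormal_eigenvectors M B"
    and maximal: "\<And>B'. orthonormal_eigenvectors M B' \<Longrightarrow> card B' \<le> card B"
  shows "orthonormal_eigenbasis M B"
proof -
  have onB: "orthonormal B"
    using B by (simp add: orthonormal_eigenvectors_def)
  define V where "V = {v. \<forall>u\<in>B. u \<bullet> v = 0}"
  have V: "subspace V"
    by (auto simp: subspace_def V_def inner_add_right)
  have inv: "M *v v \<in> V" if "v \<in> V" for v
  proof -
    have "u \<bullet> (M *v v) = 0" if "u \<in> B" for u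
    proof -
      obtain lam where "M *v u = lam *\<^sub>R u"
        using B \<open>u \<in> B\<close> by (auto simp: orthonormal_eigenvectors_def)
      then show ?thesis
        using symmetric_inner_matrix_vector[OF sym, of u v] \<open>v \<in> V\<close> \<open>u \<in> B\<close> by (simp add: V_def)
    qed
    then show ?thesis
      by (simp add: V_def)
  qed
  have "V = {0}"
  proof (rule ccontr)
    assume "V \<noteq> {0}"
    then obtain w where w: "w \<in> V" "norm w = 1"
      and "\<And>z. z \<in> V \<Longrightarrow> z \<bullet> (M *v z) \<le> (w \<bullet> (M *v w)) * (z \<bullet> z)"
      using rayleigh_maximizer_exists[OF V] by metis
    then have "M *v w = (w \<bullet> (M *v w)) *\<^sub>R w"
      using rayleigh_maximizer_eigenvector[OF sym V inv] by blast
    moreover have "w \<notin> B"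
      using w by (auto simp: V_def)
    moreover have "pairwise orthogonal (insert w B)"
      using onB w(1) by (auto simp: orthonormal_def V_def pairwise_insert orthogonal_def inner_commute)
    ultimately have "orthonormal_eigenvectors M (insert w B)"
      using B w(2) by (auto simp: orthonormal_eigenvectors_def orthonormal_def)
    then have "card (insert w B) \<le> card B"
      by (rule maximal)
    then show False
      using onB \<open>w \<notin> B\<close> by (simp add: orthonormal_def)
  qed
  have "v - (\<Sum>u\<in>B. (u \<bullet> v) *\<^sub>R u) \<in> V" for v
    using orthonormal_inner_sum[OF onB] by (simp add: V_def inner_diff_right)
  then have "v - (\<Sum>u\<in>B. (u \<bullet> v) *\<^sub>R u) = 0" for v
    using \<open>V = {0}\<close> by blast
  then have "v = (\<Sum>u\<in>B. (u \<bullet> v) *\<^sub>R u)" for v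
    by (metis right_minus_eq)
  then show ?thesis
    using B unfolding orthonormal_eigenbasis_def by blast
qed

lemma symmetric_orthonormal_eigenbasis:
  fixes M :: "real^'m^'m"
  assumes "transpose M = M"
  obtains B where "orthonormal_eigenbasis M B"
proof -
  have "orthonormal_eigenvectors M {}"
    by (simp add: orthonormal_eigenvectors_def orthonormal_def)
  moreover have "card B < Suc CARD('m)" if "orthonormal_eigenvectors M B" for B
    using orthonormal_card_le that by (fastforce simp: orthonormal_eigenvectors_def)
  ultimately obtain B where "orthonormal_eigenvectors M B"
    "\<forall>B'. orthonormal_eigenvectors M B' \<longrightarrow> card B' \<le> card B"
    using ex_has_greatest_nat[of "orthonormal_eigenvectors M" "{}" card "Suc CARD('m)"] by blast
  then show thesis
    using maximal_orthonormal_eigenvectors_basis[OF assms] that by blast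
qed

lemma orthonormal_eigenbasis_orthonormal:
  "orthonormal_eigenbasis M B \<Longrightarrow> orthonormal B"
  unfolding orthonormal_eigenbasis_def orthonormal_eigenvectors_def by blast

lemma orthonormal_eigenbasis_expansion:
  "orthonormal_eigenbasis M B \<Longrightarrow> v = (\<Sum>u\<in>B. (u \<bullet> v) *\<^sub>R u)"
  unfolding orthonormal_eigenbasis_def by blast

lemma orthonormal_eigenbasis_eigenvector:
  assumes "orthonormal_eigenbasis M B" "u \<in> B"
  shows "M *v u = (u \<bullet> (M *v u)) *\<^sub>R u"
proof -
  obtain lam where "M *v u = lam *\<^sub>R u"
    using assms unfolding orthonormal_eigenbasis_def orthonormal_eigenvectors_def by blast
  moreover have "norm u = 1"
    using assms orthonormal_eigenbasis_orthonormal by (auto simp: orthonormal_def)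
  ultimately show ?thesis
    by (rule unit_eigenvector_rayleigh[rotated])
qed

lemma orthonormal_eigenbasis_apply:
  assumes "orthonormal_eigenbasis M B"
  shows "M *v v = (\<Sum>u\<in>B. ((u \<bullet> (M *v u)) * (u \<bullet> v)) *\<^sub>R u)"
proof -
  have "M *v v = M *v (\<Sum>u\<in>B. (u \<bullet> v) *\<^sub>R u)"
    by (rule arg_cong[OF orthonormal_eigenbasis_expansion[OF assms]])
  also have "\<dots> = (\<Sum>u\<in>B. (u \<bullet> v) *\<^sub>R (M *v u))"
    by (simp add: linear_sum[OF matrix_vector_mul_linear] matrix_vector_mult_scaleR o_def)
  also have "\<dots> = (\<Sum>u\<in>B. ((u \<bullet> (M *v u)) * (u \<bullet> v)) *\<^sub>R u)"
    using orthonormal_eigenbasis_eigenvector[OF assms] by (intro sum.cong refl) (metis scaleR_scaleR mult.commute)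
  finally show ?thesis .
qed

lemma orthonormal_eigenbasis_inner_apply:
  assumes "orthonormal_eigenbasis M B" "u \<in> B"
  shows "u \<bullet> (M *v v) = (u \<bullet> (M *v u)) * (u \<bullet> v)"
  using orthonormal_inner_sum[OF orthonormal_eigenbasis_orthonormal] assms
  by (simp add: orthonormal_eigenbasis_apply[OF assms(1), of v])

lemma orthonormal_eigenbasis_quadratic_form:
  assumes "orthonormal_eigenbasis M B"
  shows "v \<bullet> (M *v v) = (\<Sum>u\<in>B. (u \<bullet> (M *v u)) * (u \<bullet> v)\<^sup>2)"
  by (simp add: orthonormal_eigenbasis_apply[OF assms, of v] inner_sum_right inner_commute power2_eq_square
      mult.assoc)

lemma orthonormal_eigenbasis_inner_self:
  assumes "orthonormal_eigenbasis M B"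
  shows "v \<bullet> v = (\<Sum>u\<in>B. (u \<bullet> v)\<^sup>2)"
proof -
  have "v \<bullet> v = v \<bullet> (\<Sum>u\<in>B. (u \<bullet> v) *\<^sub>R u)"
    by (rule arg_cong[OF orthonormal_eigenbasis_expansion[OF assms]])
  then show ?thesis
    by (simp add: inner_sum_right inner_commute power2_eq_square)
qed

lemma orthonormal_eigenbasis_eigenvalues:
  assumes "orthonormal_eigenbasis M B"
  shows "{lam. is_eigenvalue M lam} = (\<lambda>u. u \<bullet> (M *v u)) ` B"
proof (intro equalityI subsetI)
  fix lam
  assume "lam \<in> {lam. is_eigenvalue M lam}"
  then obtain v where v: "v \<noteq> 0" "M *v v = lam *\<^sub>R v"
    by (auto simp: is_eigenvalue_def)
  have "\<exists>u\<in>B. u \<bullet> v \<noteq> 0"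
  proof (rule ccontr)
    assume "\<not> (\<exists>u\<in>B. u \<bullet> v \<noteq> 0)"
    then have "(\<Sum>u\<in>B. (u \<bullet> v) *\<^sub>R u) = 0"
      by simp
    then have "v = 0"
      by (rule trans[OF orthonormal_eigenbasis_expansion[OF assms]])
    with v(1) show False ..
  qed
  then obtain u where u: "u \<in> B" "u \<bullet> v \<noteq> 0"
    by blast
  have "lam * (u \<bullet> v) = (u \<bullet> (M *v u)) * (u \<bullet> v)"
    using orthonormal_eigenbasis_inner_apply[OF assms u(1), of v] v(2) by simp
  then show "lam \<in> (\<lambda>u. u \<bullet> (M *v u)) ` B"
    using u by auto
next
  fix lam
  assume "lam \<in> (\<lambda>u. u \<bullet> (M *v u)) ` B"
  then obtain u where "u \<in> B" "lam = u \<bullet> (M *v u)"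
    by blast
  moreover have "u \<noteq> 0"
    using orthonormal_eigenbasis_orthonormal[OF assms] \<open>u \<in> B\<close> by (auto simp: orthonormal_def)
  ultimately show "lam \<in> {lam. is_eigenvalue M lam}"
    using orthonormal_eigenbasis_eigenvector[OF assms] unfolding is_eigenvalue_def by blast
qed

lemma orthonormal_eigenbasis_nonempty:
  fixes M :: "real^'m^'m"
  assumes "orthonormal_eigenbasis M B"
  shows "B \<noteq> {}"
proof
  assume "B = {}"
  then have "(vec 1 :: real^'m) = 0"
    using orthonormal_eigenbasis_expansion[OF assms, of "vec 1"] by (simp only: sum.empty)
  then show False
    by (simp add: vec_eq_iff)
qed

lemma symmetric_eigenvalues_finite_nonempty:
  fixes M :: "real^'m^'m"
  assumes "transpose M = M"
  shows "finite {lam. is_eigenvalue M lam}" "{lam. is_eigenvalue M lam} \<noteq> {}"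
proof -
  obtain B where B: "orthonormal_eigenbasis M B"
    using symmetric_orthonormal_eigenbasis[OF assms] .
  then have "finite B"
    using orthonormal_eigenbasis_orthonormal by (auto simp: orthonormal_def)
  then show "finite {lam. is_eigenvalue M lam}" "{lam. is_eigenvalue M lam} \<noteq> {}"
    using orthonormal_eigenbasis_eigenvalues[OF B] orthonormal_eigenbasis_nonempty[OF B] by auto
qed

lemma symmetric_is_eigenvalue_lambda_min:
  fixes M :: "real^'m^'m"
  assumes "transpose M = M"
  shows "is_eigenvalue M (lambda_min M)"
  using Min_in[OF symmetric_eigenvalues_finite_nonempty[OF assms]] by (simp add: lambda_min_def)

lemma symmetric_lambda_min_le_rayleigh:
  fixes M :: "real^'m^'m"
  assumes "transpose M = M"
  shows "lambda_min M * (v \<bullet> v) \<le> v \<bullet> (M *v v)"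
proof -
  obtain B where B: "orthonormal_eigenbasis M B"
    using symmetric_orthonormal_eigenbasis[OF assms] .
  have "lambda_min M \<le> u \<bullet> (M *v u)" if "u \<in> B" for u
    unfolding lambda_min_def
    using Min_le[OF symmetric_eigenvalues_finite_nonempty(1)[OF assms]] that
    by (simp add: orthonormal_eigenbasis_eigenvalues[OF B])
  then have "(\<Sum>u\<in>B. lambda_min M * (u \<bullet> v)\<^sup>2) \<le> (\<Sum>u\<in>B. (u \<bullet> (M *v u)) * (u \<bullet> v)\<^sup>2)"
    by (intro sum_mono mult_right_mono) auto
  then show ?thesis
    by (simp add: orthonormal_eigenbasis_inner_self[OF B, of v]
        orthonormal_eigenbasis_quadratic_form[OF B, of v] sum_distrib_left)
qed

lemma symmetric_rayleigh_le_lambda_max: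
  fixes M :: "real^'m^'m"
  assumes "transpose M = M"
  shows "v \<bullet> (M *v v) \<le> lambda_max M * (v \<bullet> v)"
proof -
  obtain B where B: "orthonormal_eigenbasis M B"
    using symmetric_orthonormal_eigenbasis[OF assms] .
  have "u \<bullet> (M *v u) \<le> lambda_max M" if "u \<in> B" for u
    unfolding lambda_max_def
    using Max_ge[OF symmetric_eigenvalues_finite_nonempty(1)[OF assms]] that
    by (simp add: orthonormal_eigenbasis_eigenvalues[OF B])
  then have "(\<Sum>u\<in>B. (u \<bullet> (M *v u)) * (u \<bullet> v)\<^sup>2) \<le> (\<Sum>u\<in>B. lambda_max M * (u \<bullet> v)\<^sup>2)"
    by (intro sum_mono mult_right_mono) auto
  then show ?thesis
    by (simp add: orthonormal_eigenbasis_inner_self[OF B, of v]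
        orthonormal_eigenbasis_quadratic_form[OF B, of v] sum_distrib_left)
qed

subsection \<open>The positive semidefinite square root\<close>

definition spectral_matrix :: "(real^'m \<Rightarrow> real) \<Rightarrow> (real^'m) set \<Rightarrow> real^'m^'m" where
  "spectral_matrix f B = (\<chi> i j. \<Sum>u\<in>B. f u * (u $ i * u $ j))"

lemma spectral_matrix_apply:
  "spectral_matrix f B *v v = (\<Sum>u\<in>B. (f u * (u \<bullet> v)) *\<^sub>R u)"
proof -
  have "(spectral_matrix f B *v v) $ i = (\<Sum>u\<in>B. (f u * (u \<bullet> v)) *\<^sub>R u) $ i" for i
  proof -
    have "(spectral_matrix f B *v v) $ i = (\<Sum>j\<in>UNIV. \<Sum>u\<in>B. f u * u $ i * (u $ j * v $ j))"
      by (simp add: spectral_matrix_def matrix_vector_mult_def sum_distrib_left sum_distrib_right mult_ac)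
    also have "\<dots> = (\<Sum>u\<in>B. \<Sum>j\<in>UNIV. f u * u $ i * (u $ j * v $ j))"
      by (rule sum.swap)
    also have "\<dots> = (\<Sum>u\<in>B. (f u * (u \<bullet> v)) *\<^sub>R u) $ i"
      by (simp add: inner_vec_def sum_distrib_left sum_component mult_ac)
    finally show ?thesis .
  qed
  then show ?thesis
    by (simp add: vec_eq_iff)
qed

lemma transpose_spectral_matrix: "transpose (spectral_matrix f B) = spectral_matrix f B"
  by (simp add: spectral_matrix_def transpose_def vec_eq_iff mult.commute)

lemma psd_spectral_matrix:
  assumes "\<And>u. u \<in> B \<Longrightarrow> 0 \<le> f u"
  shows "psd_mat (spectral_matrix f B)"
proof -
  have "v \<bullet> (spectral_matrix f B *v v) = (\<Sum>u\<in>B. f u * (u \<bullet> v)\<^sup>2)" for v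
    by (simp add: spectral_matrix_apply inner_sum_right inner_commute power2_eq_square mult.assoc)
  moreover have "0 \<le> (\<Sum>u\<in>B. f u * (u \<bullet> v)\<^sup>2)" for v
    using assms by (simp add: sum_nonneg)
  ultimately show ?thesis
    by (simp add: psd_mat_def transpose_spectral_matrix)
qed

lemma spectral_matrix_mult:
  assumes "orthonormal B"
  shows "spectral_matrix f B ** spectral_matrix g B = spectral_matrix (\<lambda>u. f u * g u) B"
proof -
  have "spectral_matrix f B *v (spectral_matrix g B *v v) = spectral_matrix (\<lambda>u. f u * g u) B *v v"
    for v
  proof -
    have "u \<bullet> (spectral_matrix g B *v v) = g u * (u \<bullet> v)" if "u \<in> B" for u
      unfolding spectral_matrix_apply by (rule orthonormal_inner_sum[OF assms that])
    then show ?thesis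
      by (simp add: spectral_matrix_apply mult.assoc cong: sum.cong)
  qed
  then show ?thesis
    by (simp add: matrix_eq matrix_vector_mul_assoc)
qed

lemma orthonormal_eigenbasis_spectral_matrix:
  assumes "orthonormal_eigenbasis M B"
  shows "spectral_matrix (\<lambda>u. u \<bullet> (M *v u)) B = M"
proof -
  have "spectral_matrix (\<lambda>u. u \<bullet> (M *v u)) B *v v = M *v v" for v
    unfolding spectral_matrix_apply by (rule orthonormal_eigenbasis_apply[OF assms, symmetric])
  then show ?thesis
    by (simp add: matrix_eq)
qed

lemma psd_square_root_on_eigenvector:
  assumes T: "psd_mat T" and eig: "(T ** T) *v u = mu *\<^sub>R u" and mu: "0 < mu"
  shows "T *v u = sqrt mu *\<^sub>R u"
proof -
  define s where "s = sqrt mu"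
  define z where "z = T *v u - s *\<^sub>R u"
  have s: "0 < s" "s * s = mu"
    using mu by (simp_all add: s_def)
  \<comment> \<open>(T + s) z = (T^2 - s^2) u = 0, and T + s is positive definite\<close>
  have "T *v z + s *\<^sub>R z = 0"
    using eig s(2)
    by (simp add: z_def matrix_vector_mul_assoc[symmetric] matrix_vector_mult_diff_distrib
        matrix_vector_mult_scaleR algebra_simps)
  then have "z \<bullet> (T *v z) + s * (z \<bullet> z) = 0"
    by (metis inner_add_right inner_scaleR_right inner_zero_right)
  moreover have "0 \<le> z \<bullet> (T *v z)"
    using T by (simp add: psd_mat_def)
  ultimately have "z = 0"
    using s(1) by (smt (verit) inner_eq_zero_iff inner_ge_zero mult_pos_pos)
  then show ?thesis
    by (simp add: z_def s_def)
qed

lemma psd_square_root_unique: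
  assumes B: "orthonormal_eigenbasis M B" and pos: "\<And>u. u \<in> B \<Longrightarrow> 0 < u \<bullet> (M *v u)"
    and T: "psd_mat T" "T ** T = M"
  shows "T = spectral_matrix (\<lambda>u. sqrt (u \<bullet> (M *v u))) B"
proof -
  have coordinates: "u \<bullet> (T *v v) = sqrt (u \<bullet> (M *v u)) * (u \<bullet> v)" if "u \<in> B" for u v
  proof -
    have "T *v u = sqrt (u \<bullet> (M *v u)) *\<^sub>R u"
      using psd_square_root_on_eigenvector[OF T(1)] T(2) pos[OF that]
        orthonormal_eigenbasis_eigenvector[OF B that] by metis
    then show ?thesis
      using symmetric_inner_matrix_vector[of T u v] T(1) by (simp add: psd_mat_def)
  qed
  have "T *v v = spectral_matrix (\<lambda>u. sqrt (u \<bullet> (M *v u))) B *v v" for v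
  proof -
    have "T *v v = (\<Sum>u\<in>B. (u \<bullet> (T *v v)) *\<^sub>R u)"
      by (rule orthonormal_eigenbasis_expansion[OF B])
    then show ?thesis
      by (simp add: spectral_matrix_apply coordinates cong: sum.cong)
  qed
  then show ?thesis
    by (simp add: matrix_eq)
qed

lemma mat_sqrt_positive_definite:
  fixes M :: "real^'m^'m"
  assumes sym: "transpose M = M" and pd: "\<And>v. v \<noteq> 0 \<Longrightarrow> 0 < v \<bullet> (M *v v)"
  shows "psd_mat (mat_sqrt M)" "mat_sqrt M ** mat_sqrt M = M"
proof -
  obtain B where B: "orthonormal_eigenbasis M B"
    using symmetric_orthonormal_eigenbasis[OF sym] .
  have onB: "orthonormal B"
    using B by (rule orthonormal_eigenbasis_orthonormal)
  have pos: "0 < u \<bullet> (M *v u)" if "u \<in> B" for u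
    using onB that by (intro pd) (auto simp: orthonormal_def)
  define S where "S = spectral_matrix (\<lambda>u. sqrt (u \<bullet> (M *v u))) B"
  have "psd_mat S"
    unfolding S_def by (rule psd_spectral_matrix) (simp add: pos less_imp_le)
  moreover have "S ** S = M"
  proof -
    have "S ** S = spectral_matrix (\<lambda>u. sqrt (u \<bullet> (M *v u)) * sqrt (u \<bullet> (M *v u))) B"
      by (simp add: S_def spectral_matrix_mult[OF onB])
    also have "\<dots> = spectral_matrix (\<lambda>u. u \<bullet> (M *v u)) B"
      using pos by (simp add: spectral_matrix_def less_imp_le cong: sum.cong)
    finally show ?thesis
      by (simp add: orthonormal_eigenbasis_spectral_matrix[OF B])
  qed
  ultimately have "mat_sqrt M = S"
    unfolding mat_sqrt_def
  proof (intro the_equality conjI)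
    show "T = S" if "psd_mat T \<and> T ** T = M" for T
      unfolding S_def using psd_square_root_unique[OF B pos] that by blast
  qed
  then show "psd_mat (mat_sqrt M)" "mat_sqrt M ** mat_sqrt M = M"
    using \<open>psd_mat S\<close> \<open>S ** S = M\<close> by simp_all
qed

lemma norm_psd_square_root_le:
  fixes R :: "real^'m^'m"
  assumes "transpose R = R" and bound: "\<And>v. v \<bullet> ((R ** R) *v v) \<le> c * (v \<bullet> v)"
  shows "norm (R *v v) \<le> sqrt c * norm v"
proof -
  have "(norm (R *v v))\<^sup>2 = v \<bullet> ((R ** R) *v v)"
    using symmetric_inner_matrix_vector[OF assms(1), of v "R *v v"]
    by (simp add: power2_norm_eq_inner matrix_vector_mul_assoc)
  also have "\<dots> \<le> c * (norm v)\<^sup>2"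
    using bound by (simp add: power2_norm_eq_inner)
  finally have "norm (R *v v) \<le> sqrt (c * (norm v)\<^sup>2)"
    by (rule real_le_rsqrt)
  then show ?thesis
    by (simp add: real_sqrt_mult)
qed

subsection \<open>Inverses of coercive matrices\<close>

lemma invertible_matrix_inv_apply:
  fixes G :: "real^'m^'m"
  assumes "invertible G"
  shows "G *v (matrix_inv G *v x) = x" "matrix_inv G *v (G *v x) = x"
proof -
  have "G ** matrix_inv G = mat 1 \<and> matrix_inv G ** G = mat 1"
    using someI_ex[OF assms[unfolded invertible_def]] by (simp add: matrix_inv_def)
  then show "G *v (matrix_inv G *v x) = x" "matrix_inv G *v (G *v x) = x"
    by (simp_all add: matrix_vector_mul_assoc)
qed

lemma coercive_invertible:
  fixes G :: "real^'m^'m"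
  assumes "0 < c" and coercive: "\<And>v. c * (v \<bullet> v) \<le> v \<bullet> (G *v v)"
  shows "invertible G"
proof -
  have "x = 0" if "G *v x = 0" for x
  proof -
    have "c * (x \<bullet> x) \<le> 0"
      using coercive[of x] that by simp
    then have "x \<bullet> x = 0"
      using \<open>0 < c\<close> inner_ge_zero[of x] by (simp add: mult_le_0_iff)
    then show ?thesis
      by simp
  qed
  then show ?thesis
    unfolding invertible_left_inverse matrix_left_invertible_ker by blast
qed

lemma norm_matrix_inv_coercive_le:
  fixes G :: "real^'m^'m"
  assumes "0 < c" and coercive: "\<And>v. c * (v \<bullet> v) \<le> v \<bullet> (G *v v)"
  shows "norm (matrix_inv G *v s) \<le> norm s / c"
proof -
  define p where "p = matrix_inv G *v s"
  have "G *v p = s"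
    unfolding p_def by (rule invertible_matrix_inv_apply(1)[OF coercive_invertible[OF assms]])
  then have "c * (norm p)\<^sup>2 \<le> norm p * norm s"
    using coercive[of p] norm_cauchy_schwarz[of p s] by (simp add: power2_norm_eq_inner)
  then have "c * norm p \<le> norm s"
    by (cases "p = 0") (auto simp: power2_eq_square)
  then show ?thesis
    using \<open>0 < c\<close> by (simp add: p_def le_divide_eq mult.commute)
qed

lemma matrix_inv_diff_apply:
  fixes G H :: "real^'m^'m"
  assumes "invertible G" "invertible H"
  shows "(matrix_inv G - matrix_inv H) *v z = matrix_inv G *v ((H - G) *v (matrix_inv H *v z))"
  by (simp add: matrix_vector_mult_diff_rdistrib matrix_vector_mult_diff_distrib
      invertible_matrix_inv_apply[OF assms(1)] invertible_matrix_inv_apply[OF assms(2)])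

lemma diag_mat_mult_vector: "diag_mat d *v q = (\<chi> i. d $ i * q $ i)"
  by (simp add: vec_eq_iff diag_mat_def matrix_vector_mult_def mult_delta_left)

lemma diag_mat_mult_self: "diag_mat x ** diag_mat x = diag_mat (vec_sq x)"
  by (simp add: matrix_eq matrix_vector_mul_assoc[symmetric] diag_mat_mult_vector vec_sq_def
      power2_eq_square mult.assoc)

lemma diag_mat_diff: "diag_mat d - diag_mat e = diag_mat (d - e)"
  by (simp add: diag_mat_def vec_eq_iff)

lemma vec_sq_bounds:
  assumes "0 \<le> lo" "\<forall>i. lo \<le> x $ i \<and> x $ i \<le> hi"
  shows "lo\<^sup>2 \<le> vec_sq x $ i \<and> vec_sq x $ i \<le> hi\<^sup>2"
proof -
  have "lo \<le> x $ i" "x $ i \<le> hi"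
    using assms(2) by auto
  then show ?thesis
    using assms(1) by (simp add: vec_sq_def power_mono)
qed

lemma transpose_diag_mat: "transpose (diag_mat d) = diag_mat d"
  by (simp add: diag_mat_def transpose_def vec_eq_iff)

lemma norm_diag_mat_mult_le:
  assumes "\<And>i. \<bar>d $ i\<bar> \<le> delta"
  shows "norm (diag_mat d *v q) \<le> delta * norm q"
proof -
  have "0 \<le> delta"
    using assms by (meson abs_ge_zero order_trans)
  have termwise: "(d $ i * q $ i)\<^sup>2 \<le> (delta * q $ i)\<^sup>2" for i
  proof -
    have "(d $ i)\<^sup>2 \<le> delta\<^sup>2"
      using power_mono[OF assms[of i] abs_ge_zero, of 2] by simp
    then show ?thesis
      by (simp add: power_mult_distrib mult_right_mono)
  qed
  have "(diag_mat d *v q) \<bullet> (diag_mat d *v q) = (\<Sum>i\<in>UNIV. (d $ i * q $ i)\<^sup>2)"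
    by (simp add: diag_mat_mult_vector inner_vec_def power2_eq_square)
  also have "\<dots> \<le> (\<Sum>i\<in>UNIV. (delta * q $ i)\<^sup>2)"
    by (rule sum_mono) (rule termwise)
  also have "\<dots> = (delta *\<^sub>R q) \<bullet> (delta *\<^sub>R q)"
    by (simp add: inner_vec_def power2_eq_square)
  finally have "norm (diag_mat d *v q) \<le> norm (delta *\<^sub>R q)"
    by (simp only: norm_le)
  then show ?thesis
    using \<open>0 \<le> delta\<close> by simp
qed

lemma diag_mat_quadratic_form_bounds:
  assumes "\<And>i. a \<le> d $ i \<and> d $ i \<le> b"
  shows "a * (q \<bullet> q) \<le> q \<bullet> (diag_mat d *v q)" "q \<bullet> (diag_mat d *v q) \<le> b * (q \<bullet> q)"
proof -
  have form: "q \<bullet> (diag_mat d *v q) = (\<Sum>i\<in>UNIV. d $ i * (q $ i)\<^sup>2)"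
    by (simp add: diag_mat_mult_vector inner_vec_def power2_eq_square mult_ac)
  have self: "q \<bullet> q = (\<Sum>i\<in>UNIV. (q $ i)\<^sup>2)"
    by (simp add: inner_vec_def power2_eq_square)
  show "a * (q \<bullet> q) \<le> q \<bullet> (diag_mat d *v q)" "q \<bullet> (diag_mat d *v q) \<le> b * (q \<bullet> q)"
    unfolding form self sum_distrib_left using assms by (auto intro!: sum_mono mult_right_mono)
qed

subsection \<open>Gram matrices\<close>

lemma inner_congruence:
  fixes A :: "real^'n^'m"
  shows "v \<bullet> ((A ** D ** transpose A) *v v) = (transpose A *v v) \<bullet> (D *v (transpose A *v v))"
proof -
  have "v \<bullet> ((A ** D ** transpose A) *v v) = (A *v (D *v (transpose A *v v))) \<bullet> v"
    by (simp only: inner_commute matrix_vector_mul_assoc matrix_mul_assoc)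
  also have "\<dots> = (D *v (transpose A *v v)) \<bullet> (transpose A *v v)"
    by (rule inner_matrix_vector_transpose)
  finally show ?thesis
    by (simp only: inner_commute)
qed

lemma inner_gram: "v \<bullet> (((A::real^'n^'m) ** transpose A) *v v) = (transpose A *v v) \<bullet> (transpose A *v v)"
  using inner_congruence[of v A "mat 1"] by simp

lemma transpose_congruence:
  fixes A :: "real^'n^'m"
  assumes "transpose D = D"
  shows "transpose (A ** D ** transpose A) = A ** D ** transpose A"
  using assms by (simp add: matrix_transpose_mul matrix_mul_assoc)

lemma transpose_gram: "transpose ((A::real^'n^'m) ** transpose A) = A ** transpose A"
  by (simp add: matrix_transpose_mul)

lemma inner_transpose_mult_le_lambda_max:
  fixes A :: "real^'n^'m"
  shows "(transpose A *v v) \<bullet> (transpose A *v v) \<le> lambda_max (A ** transpose A) * (v \<bullet> v)"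
  using symmetric_rayleigh_le_lambda_max[OF transpose_gram[of A], of v] by (simp only: inner_gram)

lemma lambda_min_le_inner_transpose_mult:
  fixes A :: "real^'n^'m"
  shows "lambda_min (A ** transpose A) * (v \<bullet> v) \<le> (transpose A *v v) \<bullet> (transpose A *v v)"
  using symmetric_lambda_min_le_rayleigh[OF transpose_gram[of A], of v] by (simp only: inner_gram)

lemma lambda_max_gram_nonneg: "0 \<le> lambda_max ((A::real^'n^'m) ** transpose A)"
proof -
  let ?e = "axis undefined 1 :: real^'m"
  have "0 \<le> (transpose A *v ?e) \<bullet> (transpose A *v ?e)"
    by simp
  also have "\<dots> \<le> lambda_max (A ** transpose A) * (?e \<bullet> ?e)"
    by (rule inner_transpose_mult_le_lambda_max)
  finally show ?thesis
    by (simp add: inner_axis_axis)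
qed

lemma lambda_min_gram_pos:
  fixes A :: "real^'n^'m"
  assumes "invertible (A ** transpose A)"
  shows "0 < lambda_min (A ** transpose A)"
proof -
  let ?l = "lambda_min (A ** transpose A)"
  obtain v where v: "v \<noteq> 0" "(A ** transpose A) *v v = ?l *\<^sub>R v"
    using symmetric_is_eigenvalue_lambda_min[OF transpose_gram] by (auto simp: is_eigenvalue_def)
  have "?l * (v \<bullet> v) = v \<bullet> ((A ** transpose A) *v v)"
    using v(2) by simp
  also have "\<dots> = (transpose A *v v) \<bullet> (transpose A *v v)"
    by (rule inner_gram)
  finally have "0 \<le> ?l * (v \<bullet> v)"
    by simp
  moreover have "0 < v \<bullet> v"
    using v(1) by simp
  ultimately have "0 \<le> ?l"
    by (simp add: zero_le_mult_iff)
  moreover have "?l \<noteq> 0"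
  proof
    assume "?l = 0"
    then have "v = matrix_inv (A ** transpose A) *v 0"
      using invertible_matrix_inv_apply(2)[OF assms, of v] v(2) by simp
    with v(1) show False
      by simp
  qed
  ultimately show ?thesis
    by simp
qed

lemma norm_transpose_mult_le:
  fixes A :: "real^'n^'m"
  shows "norm (transpose A *v v) \<le> sqrt (lambda_max (A ** transpose A)) * norm v"
proof -
  have "norm (transpose A *v v) = sqrt ((transpose A *v v) \<bullet> (transpose A *v v))"
    by (rule norm_eq_sqrt_inner)
  also have "\<dots> \<le> sqrt (lambda_max (A ** transpose A) * (v \<bullet> v))"
    using inner_transpose_mult_le_lambda_max by (rule real_sqrt_le_mono)
  also have "\<dots> = sqrt (lambda_max (A ** transpose A)) * norm v"
    by (simp add: real_sqrt_mult norm_eq_sqrt_inner)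
  finally show ?thesis .
qed

lemma norm_mult_le_sqrt_lambda_max:
  fixes A :: "real^'n^'m"
  shows "norm (A *v z) \<le> sqrt (lambda_max (A ** transpose A)) * norm z"
proof -
  let ?s = "sqrt (lambda_max (A ** transpose A))"
  have "(norm (A *v z))\<^sup>2 = z \<bullet> (transpose A *v (A *v z))"
    unfolding power2_norm_eq_inner by (rule inner_matrix_vector_transpose)
  also have "\<dots> \<le> norm z * norm (transpose A *v (A *v z))"
    by (rule norm_cauchy_schwarz)
  also have "\<dots> \<le> norm z * (?s * norm (A *v z))"
    by (rule mult_left_mono[OF norm_transpose_mult_le norm_ge_zero])
  finally have "(norm (A *v z))\<^sup>2 \<le> (?s * norm z) * norm (A *v z)"
    by (simp add: mult_ac)
  moreover have "0 \<le> ?s * norm z"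
    by (simp add: lambda_max_gram_nonneg)
  ultimately show ?thesis
    by (cases "A *v z = 0") (auto simp: power2_eq_square dest: mult_right_le_imp_le)
qed

lemma gram_quadratic_form_bounds:
  fixes A :: "real^'n^'m"
  assumes "0 \<le> a" and d: "\<And>i. a \<le> d $ i \<and> d $ i \<le> b"
  shows "a * lambda_min (A ** transpose A) * (v \<bullet> v) \<le> v \<bullet> ((A ** diag_mat d ** transpose A) *v v)"
    "v \<bullet> ((A ** diag_mat d ** transpose A) *v v) \<le> b * lambda_max (A ** transpose A) * (v \<bullet> v)"
proof -
  let ?q = "transpose A *v v"
  have "0 \<le> b"
    using \<open>0 \<le> a\<close> d[of undefined] by linarith
  show "a * lambda_min (A ** transpose A) * (v \<bullet> v) \<le> v \<bullet> ((A ** diag_mat d ** transpose A) *v v)"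
    using mult_left_mono[OF lambda_min_le_inner_transpose_mult[of A v] \<open>0 \<le> a\<close>]
      diag_mat_quadratic_form_bounds(1)[OF d, of ?q]
    by (simp add: inner_congruence mult.assoc)
  show "v \<bullet> ((A ** diag_mat d ** transpose A) *v v) \<le> b * lambda_max (A ** transpose A) * (v \<bullet> v)"
    using mult_left_mono[OF inner_transpose_mult_le_lambda_max[of A v] \<open>0 \<le> b\<close>]
      diag_mat_quadratic_form_bounds(2)[OF d, of ?q]
    by (simp add: inner_congruence mult.assoc)
qed

lemma gram_diff:
  fixes A :: "real^'n^'m"
  shows "A ** diag_mat e ** transpose A - A ** diag_mat d ** transpose A = A ** diag_mat (e - d) ** transpose A"
  by (simp add: matrix_eq matrix_vector_mult_diff_rdistrib matrix_vector_mult_diff_distrib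
      matrix_vector_mul_assoc[symmetric] flip: diag_mat_diff)

lemma norm_gram_inverse_diff_le:
  fixes A :: "real^'n^'m"
  assumes inv: "invertible (A ** transpose A)" and "0 < a"
    and d: "\<And>i. a \<le> d $ i \<and> d $ i \<le> b" and e: "\<And>i. a \<le> e $ i \<and> e $ i \<le> b"
  shows "norm ((matrix_inv (A ** diag_mat d ** transpose A) - matrix_inv (A ** diag_mat e ** transpose A)) *v z)
    \<le> lambda_max (A ** transpose A) * infnorm (d - e) / (a\<^sup>2 * (lambda_min (A ** transpose A))\<^sup>2) * norm z"
proof -
  let ?G = "\<lambda>x. A ** diag_mat x ** transpose A"
  define l where "l = lambda_max (A ** transpose A)"
  define c where "c = a * lambda_min (A ** transpose A)"
  define delta where "delta = infnorm (d - e)"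
  define p where "p = matrix_inv (?G e) *v z"
  have "0 < c"
    using \<open>0 < a\<close> lambda_min_gram_pos[OF inv] by (simp add: c_def)
  have coercive_d: "\<And>v. c * (v \<bullet> v) \<le> v \<bullet> (?G d *v v)"
    using gram_quadratic_form_bounds(1)[OF less_imp_le[OF \<open>0 < a\<close>] d] by (simp add: c_def)
  have coercive_e: "\<And>v. c * (v \<bullet> v) \<le> v \<bullet> (?G e *v v)"
    using gram_quadratic_form_bounds(1)[OF less_imp_le[OF \<open>0 < a\<close>] e] by (simp add: c_def)
  have entries: "\<bar>(e - d) $ i\<bar> \<le> delta" for i
    unfolding delta_def infnorm_sub[of d] by (rule component_le_infnorm_cart)
  have "0 \<le> l" "0 \<le> delta"
    by (simp_all add: l_def delta_def lambda_max_gram_nonneg infnorm_pos_le)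
  have "(matrix_inv (?G d) - matrix_inv (?G e)) *v z
      = matrix_inv (?G d) *v (A *v (diag_mat (e - d) *v (transpose A *v p)))"
    using matrix_inv_diff_apply[OF coercive_invertible[OF \<open>0 < c\<close> coercive_d]
        coercive_invertible[OF \<open>0 < c\<close> coercive_e], of z]
    by (simp only: p_def gram_diff matrix_vector_mul_assoc matrix_mul_assoc)
  then have "norm ((matrix_inv (?G d) - matrix_inv (?G e)) *v z)
      \<le> norm (A *v (diag_mat (e - d) *v (transpose A *v p))) / c"
    using norm_matrix_inv_coercive_le[OF \<open>0 < c\<close> coercive_d] by simp
  also have "\<dots> \<le> sqrt l * norm (diag_mat (e - d) *v (transpose A *v p)) / c"
    unfolding l_def using \<open>0 < c\<close> by (intro divide_right_mono norm_mult_le_sqrt_lambda_max) simp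
  also have "\<dots> \<le> sqrt l * (delta * norm (transpose A *v p)) / c"
    using norm_diag_mat_mult_le[OF entries] \<open>0 < c\<close> \<open>0 \<le> l\<close>
    by (simp add: divide_right_mono mult_left_mono)
  also have "\<dots> \<le> sqrt l * (delta * (sqrt l * norm p)) / c"
    unfolding l_def using \<open>0 < c\<close> \<open>0 \<le> delta\<close>
    by (intro divide_right_mono mult_left_mono norm_transpose_mult_le) (simp_all add: lambda_max_gram_nonneg)
  also have "\<dots> \<le> sqrt l * (delta * (sqrt l * (norm z / c))) / c"
    unfolding p_def using \<open>0 < c\<close> \<open>0 \<le> l\<close> \<open>0 \<le> delta\<close>
    by (intro divide_right_mono mult_left_mono norm_matrix_inv_coercive_le[OF \<open>0 < c\<close> coercive_e]) simp_all
  also have "\<dots> = l * delta / (a\<^sup>2 * (lambda_min (A ** transpose A))\<^sup>2) * norm z"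
    using \<open>0 \<le> l\<close> by (simp add: c_def power2_eq_square mult_ac flip: real_sqrt_mult)
  finally show ?thesis
    by (simp add: l_def delta_def)
qed

lemma norm_mat_sqrt_gram_le:
  fixes A :: "real^'n^'m"
  assumes inv: "invertible (A ** transpose A)" and "0 < a" and d: "\<And>i. a \<le> d $ i \<and> d $ i \<le> b"
  shows "norm (mat_sqrt (A ** diag_mat d ** transpose A) *v v) \<le> sqrt (b * lambda_max (A ** transpose A)) * norm v"
proof -
  let ?G = "A ** diag_mat d ** transpose A"
  have "0 < v \<bullet> (?G *v v)" if "v \<noteq> 0" for v
  proof -
    have "0 < a * lambda_min (A ** transpose A) * (v \<bullet> v)"
      using \<open>0 < a\<close> lambda_min_gram_pos[OF inv] that by simp
    then show ?thesis
      using gram_quadratic_form_bounds(1)[OF less_imp_le[OF \<open>0 < a\<close>] d, of A v] by linarith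
  qed
  then have psd: "psd_mat (mat_sqrt ?G)" and square: "mat_sqrt ?G ** mat_sqrt ?G = ?G"
    using mat_sqrt_positive_definite[OF transpose_congruence[OF transpose_diag_mat]] by blast+
  show ?thesis
  proof (rule norm_psd_square_root_le)
    show "transpose (mat_sqrt ?G) = mat_sqrt ?G"
      using psd by (simp add: psd_mat_def)
    show "w \<bullet> ((mat_sqrt ?G ** mat_sqrt ?G) *v w) \<le> b * lambda_max (A ** transpose A) * (w \<bullet> w)" for w
      unfolding square by (rule gram_quadratic_form_bounds(2)[OF less_imp_le[OF \<open>0 < a\<close>] d])
  qed
qed

lemma norm_mult_diag_mat_le:
  fixes A :: "real^'n^'m"
  assumes "\<And>i. \<bar>x $ i\<bar> \<le> c"
  shows "norm (A *v (diag_mat x *v u)) \<le> c * sqrt (lambda_max (A ** transpose A)) * norm u"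
proof -
  have "norm (A *v (diag_mat x *v u)) \<le> sqrt (lambda_max (A ** transpose A)) * norm (diag_mat x *v u)"
    by (rule norm_mult_le_sqrt_lambda_max)
  also have "\<dots> \<le> sqrt (lambda_max (A ** transpose A)) * (c * norm u)"
    by (intro mult_left_mono norm_diag_mat_mult_le assms) (simp add: lambda_max_gram_nonneg)
  finally show ?thesis
    by (simp add: mult_ac)
qed

lemma abs_eigenvalue_le_norm_bound:
  assumes "\<And>v. norm (M *v v) \<le> C * norm v" and "is_eigenvalue M lam"
  shows "\<bar>lam\<bar> \<le> C"
proof -
  obtain v where "v \<noteq> 0" "M *v v = lam *\<^sub>R v"
    using assms(2) by (auto simp: is_eigenvalue_def)
  then show ?thesis
    using assms(1)[of v] by simp
qed

lemma abs_eigenvalue_sandwich_le: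
  assumes R: "\<And>v. norm (R *v v) \<le> r * norm v" and S: "\<And>v. norm (S *v v) \<le> s * norm v"
    and "0 \<le> r" "0 \<le> s" and "is_eigenvalue (R ** S ** R) lam"
  shows "\<bar>lam\<bar> \<le> r * s * r"
proof (rule abs_eigenvalue_le_norm_bound[OF _ assms(5)])
  fix v
  have "norm ((R ** S ** R) *v v) = norm (R *v (S *v (R *v v)))"
    by (simp add: matrix_vector_mul_assoc matrix_mul_assoc)
  also have "\<dots> \<le> r * (s * (r * norm v))"
    using R[of "S *v (R *v v)"] mult_left_mono[OF S \<open>0 \<le> r\<close>] mult_left_mono[OF R \<open>0 \<le> s\<close>]
      mult_left_mono[OF _ \<open>0 \<le> r\<close>] by (meson order_trans)
  finally show "norm ((R ** S ** R) *v v) \<le> r * s * r * norm v"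
    by (simp add: mult_ac)
qed

lemma abs_quadratic_form_sandwich_le:
  assumes y: "norm y \<le> r * norm u" and S: "\<And>v. norm (S *v v) \<le> s * norm v" and "0 \<le> s"
  shows "\<bar>y \<bullet> (S *v y)\<bar> \<le> r * s * r * (u \<bullet> u)"
proof -
  have "\<bar>y \<bullet> (S *v y)\<bar> \<le> norm y * norm (S *v y)"
    by (rule Cauchy_Schwarz_ineq2)
  also have "\<dots> \<le> s * (norm y)\<^sup>2"
    using mult_left_mono[OF S norm_ge_zero[of y]] by (simp add: power2_eq_square mult_ac)
  also have "\<dots> \<le> s * (r * norm u)\<^sup>2"
    using y \<open>0 \<le> s\<close> by (simp add: mult_left_mono power_mono)
  finally show ?thesis
    by (simp add: power2_eq_square power2_norm_eq_inner[symmetric] mult_ac)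
qed

lemma abs_scaled_sum_le:
  fixes f g :: "'a \<Rightarrow> real"
  assumes "0 \<le> c" and "\<And>l. l \<in> I \<Longrightarrow> \<bar>f l\<bar> \<le> B * g l"
  shows "\<bar>c * sum f I\<bar> \<le> B * (c * sum g I)"
proof -
  have "\<bar>sum f I\<bar> \<le> (\<Sum>l\<in>I. \<bar>f l\<bar>)"
    by (rule sum_abs)
  also have "\<dots> \<le> (\<Sum>l\<in>I. B * g l)"
    by (rule sum_mono) (rule assms(2))
  finally have "\<bar>c * sum f I\<bar> \<le> c * (\<Sum>l\<in>I. B * g l)"
    using \<open>0 \<le> c\<close> by (simp add: abs_mult mult_left_mono)
  then show ?thesis
    by (simp add: sum_distrib_left mult.left_commute)
qed

lemma norm_inverse_gram_sq_diff_le: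
  fixes A :: "real^'n^'m"
  assumes "invertible (A ** transpose A)" "0 < x_min"
    and "\<forall>i. x_min \<le> x $ i \<and> x $ i \<le> x_max" "\<forall>i. x_min \<le> y $ i \<and> y $ i \<le> x_max"
  shows "norm ((matrix_inv (A ** (diag_mat x ** diag_mat x) ** transpose A)
      - matrix_inv (A ** (diag_mat y ** diag_mat y) ** transpose A)) *v z)
    \<le> lambda_max (A ** transpose A) * infnorm (vec_sq x - vec_sq y)
      / (x_min^4 * (lambda_min (A ** transpose A))\<^sup>2) * norm z"
  using norm_gram_inverse_diff_le[OF assms(1) _ vec_sq_bounds[OF _ assms(3)] vec_sq_bounds[OF _ assms(4)]]
    assms(2)
  by (simp add: diag_mat_mult_self)

lemma norm_mat_sqrt_gram_sq_le:
  fixes A :: "real^'n^'m"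
  assumes "invertible (A ** transpose A)" "0 < x_min" "\<forall>i. x_min \<le> x $ i \<and> x $ i \<le> x_max"
  shows "norm (mat_sqrt (A ** (diag_mat x ** diag_mat x) ** transpose A) *v v)
    \<le> x_max * sqrt (lambda_max (A ** transpose A)) * norm v"
proof -
  have "0 \<le> x_max"
    using assms(2) assms(3)[rule_format, of undefined] by linarith
  then show ?thesis
    using norm_mat_sqrt_gram_le[OF assms(1) _ vec_sq_bounds[OF _ assms(3)]] assms(2)
    by (simp add: diag_mat_mult_self real_sqrt_mult)
qed

theorem lemma7:
  fixes A :: "real^'n^'m"
    and x_min x_max sigma_w :: real
    and x_o x_hat x_tilde :: "real^'n"
    and w :: "nat \<Rightarrow> real^'n"
    and L :: nat
  assumes "invertible (A ** transpose A)"
    and "0 < x_min" and "x_min \<le> x_max"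
    and "\<forall>i. x_min \<le> x_o $ i \<and> x_o $ i \<le> x_max"
    and "\<forall>i. x_min \<le> x_hat $ i \<and> x_hat $ i \<le> x_max"
    and "\<forall>i. x_min \<le> x_tilde $ i \<and> x_tilde $ i \<le> x_max"
    and "0 < sigma_w" and "1 \<le> L"
  shows
    "let X_o = diag_mat x_o; X_hat = diag_mat x_hat; X_tilde = diag_mat x_tilde;
         Sig_o = matrix_inv (A ** (X_o ** X_o) ** transpose A);
         Sig_hat = matrix_inv (A ** (X_hat ** X_hat) ** transpose A);
         Sig_tilde = matrix_inv (A ** (X_tilde ** X_tilde) ** transpose A);
         R = mat_sqrt (A ** (X_o ** X_o) ** transpose A);
         B = x_max^2 * (lambda_max (A ** transpose A))^2
               * infnorm (vec_sq x_hat - vec_sq x_tilde)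
             / (x_min^4 * (lambda_min (A ** transpose A))^2);
         y = (\<lambda>l. A *v (X_o *v w l))
     in (\<forall>lam. is_eigenvalue (R ** (Sig_hat - Sig_tilde) ** R) lam \<longrightarrow> \<bar>lam\<bar> \<le> B)
      \<and> \<bar>(1 / (real L * sigma_w^2)) * (\<Sum>l=1..L. y l \<bullet> ((Sig_hat - Sig_tilde) *v y l))\<bar>
          \<le> B * (1 + (1 / (real L * sigma_w^2)) * (\<Sum>l=1..L. w l \<bullet> w l))"
proof -
  let ?S = "matrix_inv (A ** (diag_mat x_hat ** diag_mat x_hat) ** transpose A)
    - matrix_inv (A ** (diag_mat x_tilde ** diag_mat x_tilde) ** transpose A)"
  let ?c = "1 / (real L * sigma_w^2)"
  define l where "l = lambda_max (A ** transpose A)"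
  define r where "r = x_max * sqrt l"
  define K where "K = l * infnorm (vec_sq x_hat - vec_sq x_tilde) / (x_min^4 * (lambda_min (A ** transpose A))\<^sup>2)"
  have "0 \<le> l" "0 \<le> K" "0 \<le> r"
    using assms(2,3) by (simp_all add: l_def K_def r_def lambda_max_gram_nonneg infnorm_pos_le)
  have S: "norm (?S *v z) \<le> K * norm z" for z
    unfolding K_def l_def by (rule norm_inverse_gram_sq_diff_le[OF assms(1,2,5,6)])
  have R: "norm (mat_sqrt (A ** (diag_mat x_o ** diag_mat x_o) ** transpose A) *v v) \<le> r * norm v" for v
    unfolding r_def l_def by (rule norm_mat_sqrt_gram_sq_le[OF assms(1,2,4)])
  have "\<bar>x_o $ i\<bar> \<le> x_max" for i
    using assms(2) assms(4)[rule_format, of i] by linarith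
  then have y: "norm (A *v (diag_mat x_o *v u)) \<le> r * norm u" for u
    unfolding r_def l_def by (rule norm_mult_diag_mat_le)
  have "\<bar>?c * (\<Sum>l=1..L. (A *v (diag_mat x_o *v w l)) \<bullet> (?S *v (A *v (diag_mat x_o *v w l))))\<bar>
      \<le> r * K * r * (?c * (\<Sum>l=1..L. w l \<bullet> w l))"
    by (intro abs_scaled_sum_le abs_quadratic_form_sandwich_le[OF y S \<open>0 \<le> K\<close>]) simp
  also have "\<dots> \<le> r * K * r * (1 + ?c * (\<Sum>l=1..L. w l \<bullet> w l))"
    using \<open>0 \<le> K\<close> \<open>0 \<le> r\<close> by (intro mult_left_mono) simp_all
  finally have average: "\<bar>?c * (\<Sum>l=1..L. (A *v (diag_mat x_o *v w l)) \<bullet> (?S *v (A *v (diag_mat x_o *v w l))))\<bar>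
      \<le> r * K * r * (1 + ?c * (\<Sum>l=1..L. w l \<bullet> w l))" .
  have B:  "x_max^2 * l^2 * infnorm (vec_sq x_hat - vec_sq x_tilde)
      / (x_min^4 * (lambda_min (A ** transpose A))^2) = r * K * r"
    using \<open>0 \<le> l\<close> by (simp add: r_def K_def power2_eq_square mult_ac)
  show ?thesis
    using average B abs_eigenvalue_sandwich_le[OF R S \<open>0 \<le> r\<close> \<open>0 \<le> K\<close>] by (simp add: Let_def l_def)
qed

end
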